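(* Let $\operatorname{Cs}(4)=\{x,y,z\}$ be the quandle with multiplication $xx=x$, $yy=y$, $zz=z$, $xy=x$, $xz=y$, $yx=y$, $yz=x$, $zx=z$, $zy=z$. Then $\operatorname{Aut}(\mathbb{Z}[\operatorname{Cs}(4)])\cong\mathbb{Z}_2$.
   Context: For a quandle $Q$, the quandle ring $\mathbb{Z}[Q]$ is the free abelian group with basis $Q$, with multiplication $\big(\sum_i\alpha_i q_i\big)\big(\sum_j\beta_j q_j\big)=\sum_{i,j}\alpha_i\beta_j (q_iq_j)$. $\operatorname{Aut}(\mathbb{Z}[Q])$ denotes the group of ring automorphisms of $\mathbb{Z}[Q]$ (bijective additive maps preserving the multiplication). *)

theory Defs
  imports "HOL-Algebra.Elementary_Groups"
begin

datatype cs4 = X | Y | Z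

lemma UNIV_cs4: "(UNIV :: cs4 set) = {X, Y, Z}"
  by (auto intro: cs4.exhaust)

instance cs4 :: finite
  by standard (simp add: UNIV_cs4)

fun cs4_op :: "cs4 \<Rightarrow> cs4 \<Rightarrow> cs4" where
  "cs4_op X X = X" | "cs4_op Y Y = Y" | "cs4_op Z Z = Z"
| "cs4_op X Y = X" | "cs4_op X Z = Y"
| "cs4_op Y X = Y" | "cs4_op Y Z = X"
| "cs4_op Z X = Z" | "cs4_op Z Y = Z"

text \<open>Quandle ring Z[Q] for a finite quandle Q: elements are the integer coefficient
  functions Q \<Rightarrow> int (free abelian group on Q, Q finite); addition pointwise;
  multiplication is the bilinear extension of the quandle operation.\<close>
definition qring_mult :: "('q::finite \<Rightarrow> 'q \<Rightarrow> 'q) \<Rightarrow> ('q \<Rightarrow> int) \<Rightarrow> ('q \<Rightarrow> int) \<Rightarrow> ('q \<Rightarrow> int)" where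
  "qring_mult op a b = (\<lambda>r. \<Sum>p\<in>UNIV. \<Sum>q\<in>UNIV. if op p q = r then a p * b q else 0)"

definition qring_aut :: "('q::finite \<Rightarrow> 'q \<Rightarrow> 'q) \<Rightarrow> (('q \<Rightarrow> int) \<Rightarrow> ('q \<Rightarrow> int)) \<Rightarrow> bool" where
  "qring_aut op f \<longleftrightarrow> bij f \<and> (\<forall>a b. f (\<lambda>q. a q + b q) = (\<lambda>q. f a q + f b q))
     \<and> (\<forall>a b. f (qring_mult op a b) = qring_mult op (f a) (f b))"

definition qring_Aut :: "('q::finite \<Rightarrow> 'q \<Rightarrow> 'q) \<Rightarrow> (('q \<Rightarrow> int) \<Rightarrow> ('q \<Rightarrow> int)) monoid" where
  "qring_Aut op = \<lparr>carrier = {f. qring_aut op f}, monoid.mult = (\<lambda>f g. f \<circ> g), one = id\<rparr>"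

end

theory Submission
  imports Defs HOL.Modules "HOL-Library.Function_Algebras"
begin

text \<open>Right multiplication by x or y is the identity of \<open>\<int>[Cs(4)]\<close>, and right multiplication
  by z swaps the x- and y-coefficients. Under an automorphism f, right multiplication by f p is
  conjugate to right multiplication by p, so u = f x and v = f y are right identities and w = f z
  acts on the right as an involution; together with \<open>u w = v\<close>, \<open>w w = w\<close> and \<open>u \<noteq> v\<close> this
  forces \<open>w = z\<close> and v = swap u. As the matrix of f is invertible over \<open>\<int>\<close>, u is x or y, so f
  is the identity or the swap, which is induced by the quandle automorphism exchanging x and y.\<close>

definition qring_of :: "'q \<Rightarrow> 'q \<Rightarrow> int" where
  "qring_of p = (\<lambda>r. if r = p then 1 else 0)"

lemma additive_scale_int:
  fixes f :: "('a \<Rightarrow> int) \<Rightarrow> ('b \<Rightarrow> int)"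
  assumes "additive f"
  shows "f (\<lambda>r. n * a r) = (\<lambda>r. n * f a r)"
proof (induction n rule: int_induct[where k = 0])
  case base
  show ?case
    using additive.zero[OF assms] by (simp add: zero_fun_def)
next
  case (step1 i)
  have "f (\<lambda>r. (i + 1) * a r) = f ((\<lambda>r. i * a r) + a)"
    by (simp add: plus_fun_def algebra_simps)
  also have "\<dots> = f (\<lambda>r. i * a r) + f a"
    by (rule additive.add[OF assms])
  also have "\<dots> = (\<lambda>r. (i + 1) * f a r)"
    using step1.IH by (simp add: fun_eq_iff algebra_simps)
  finally show ?case .
next
  case (step2 i)
  have "f (\<lambda>r. (i - 1) * a r) = f ((\<lambda>r. i * a r) - a)"
    by (simp add: fun_diff_def algebra_simps)
  also have "\<dots> = f (\<lambda>r. i * a r) - f a"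
    by (rule additive.diff[OF assms])
  also have "\<dots> = (\<lambda>r. (i - 1) * f a r)"
    using step2.IH by (simp add: fun_eq_iff algebra_simps)
  finally show ?case .
qed

lemma sum_fun_apply: "(\<Sum>q\<in>A. g q) r = (\<Sum>q\<in>A. g q r)"
  by (induction A rule: infinite_finite_induct) auto

lemma additive_qring_expansion:
  fixes f :: "('q::finite \<Rightarrow> int) \<Rightarrow> ('p \<Rightarrow> int)"
  assumes "additive f"
  shows "f a r = (\<Sum>q\<in>UNIV. a q * f (qring_of q) r)"
proof -
  have "a = (\<Sum>q\<in>UNIV. (\<lambda>r. a q * qring_of q r))"
  proof
    fix r
    have "a r = (\<Sum>q\<in>UNIV. if q = r then a q else 0)"
      by simp
    also have "\<dots> = (\<Sum>q\<in>UNIV. (\<lambda>r. a q * qring_of q r)) r"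
      unfolding sum_fun_apply by (intro sum.cong) (auto simp: qring_of_def)
    finally show "a r = (\<Sum>q\<in>UNIV. (\<lambda>r. a q * qring_of q r)) r" .
  qed
  then have "f a = f (\<Sum>q\<in>UNIV. (\<lambda>r. a q * qring_of q r))"
    by (rule arg_cong)
  also have "\<dots> = (\<Sum>q\<in>UNIV. f (\<lambda>r. a q * qring_of q r))"
    by (rule additive.sum[OF assms])
  also have "\<dots> = (\<Sum>q\<in>UNIV. (\<lambda>r. a q * f (qring_of q) r))"
    by (simp only: additive_scale_int[OF assms])
  finally have "f a = (\<Sum>q\<in>UNIV. (\<lambda>r. a q * f (qring_of q) r))" .
  then show ?thesis
    by (simp add: sum_fun_apply)
qed

lemma additive_qring_eqI:
  fixes f g :: "('q::finite \<Rightarrow> int) \<Rightarrow> ('p \<Rightarrow> int)"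
  assumes "additive f" "additive g" "\<And>q. f (qring_of q) = g (qring_of q)"
  shows "f = g"
proof (intro ext)
  fix a r
  show "f a r = g a r"
    by (simp only: additive_qring_expansion[OF assms(1), of a]
        additive_qring_expansion[OF assms(2), of a] assms(3))
qed

lemma qring_aut_additive: "qring_aut op f \<Longrightarrow> additive f"
  by (simp add: qring_aut_def additive_def plus_fun_def)

lemma qring_aut_id: "qring_aut op id"
  by (simp add: qring_aut_def)

lemma qring_aut_comp: "qring_aut op f \<Longrightarrow> qring_aut op g \<Longrightarrow> qring_aut op (f \<circ> g)"
  by (simp add: qring_aut_def bij_comp)

lemma one_qring_Aut: "\<one>\<^bsub>qring_Aut op\<^esub> = id"
  by (simp add: qring_Aut_def)

lemma mult_qring_Aut: "f \<otimes>\<^bsub>qring_Aut op\<^esub> g = f \<circ> g"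
  by (simp add: qring_Aut_def)

lemma monoid_qring_Aut: "monoid (qring_Aut op)"
  by (rule monoidI) (simp_all add: qring_Aut_def qring_aut_id qring_aut_comp comp_assoc)

lemma qring_aut_mult_image:
  assumes "qring_aut op f"
  shows "qring_mult op b (f c) = f (qring_mult op (inv_into UNIV f b) c)"
  using assms by (simp add: qring_aut_def bij_is_surj surj_f_inv_f)

lemma qring_aut_comp_quandle_aut:
  fixes \<sigma> :: "'q::finite \<Rightarrow> 'q"
  assumes bij: "bij \<sigma>" and hom: "\<And>p q. \<sigma> (op p q) = op (\<sigma> p) (\<sigma> q)"
  shows "qring_aut op (\<lambda>a. a \<circ> \<sigma>)"
  unfolding qring_aut_def
proof (intro conjI allI)
  have "inv_into UNIV \<sigma> \<circ> \<sigma> = id"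
    using bij by (simp add: bij_is_inj)
  moreover have "\<sigma> \<circ> inv_into UNIV \<sigma> = id"
    using bij_is_surj[OF bij] surj_iff by blast
  ultimately show "bij (\<lambda>a. a \<circ> \<sigma>)"
    by (intro o_bij[where g = "\<lambda>a. a \<circ> inv_into UNIV \<sigma>"]) (simp_all add: fun_eq_iff comp_assoc)
next
  fix a b :: "'q \<Rightarrow> int"
  show "(\<lambda>q. a q + b q) \<circ> \<sigma> = (\<lambda>q. (a \<circ> \<sigma>) q + (b \<circ> \<sigma>) q)"
    by auto
  have "qring_mult op a b (\<sigma> r) = qring_mult op (a \<circ> \<sigma>) (b \<circ> \<sigma>) r" for r
  proof -
    have "qring_mult op a b (\<sigma> r)
        = (\<Sum>p\<in>UNIV. \<Sum>q\<in>UNIV. if op p (\<sigma> q) = \<sigma> r then a p * b (\<sigma> q) else 0)"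
      unfolding qring_mult_def by (intro sum.cong refl sum.reindex_bij_betw[OF bij, symmetric])
    also have "\<dots> = (\<Sum>p\<in>UNIV. \<Sum>q\<in>UNIV.
        if op (\<sigma> p) (\<sigma> q) = \<sigma> r then a (\<sigma> p) * b (\<sigma> q) else 0)"
      by (rule sum.reindex_bij_betw[OF bij, symmetric])
    also have "\<dots> = qring_mult op (a \<circ> \<sigma>) (b \<circ> \<sigma>) r"
      using bij_is_inj[OF bij] by (simp add: qring_mult_def hom[symmetric] inj_eq cong: if_cong)
    finally show ?thesis .
  qed
  then show "qring_mult op a b \<circ> \<sigma> = qring_mult op (a \<circ> \<sigma>) (b \<circ> \<sigma>)"
    by auto
qed

fun cs4_swap :: "cs4 \<Rightarrow> cs4" where
  "cs4_swap X = Y" | "cs4_swap Y = X" | "cs4_swap Z = Z"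

lemma cs4_swap_swap [simp]: "cs4_swap (cs4_swap p) = p"
  by (cases p) simp_all

lemma cs4_swap_comp_swap: "cs4_swap \<circ> cs4_swap = id"
  by (simp add: fun_eq_iff)

lemma cs4_swap_quandle_hom: "cs4_swap (cs4_op p q) = cs4_op (cs4_swap p) (cs4_swap q)"
  by (cases p; cases q) simp_all

lemma qring_aut_cs4_swap: "qring_aut cs4_op (\<lambda>a. a \<circ> cs4_swap)"
  by (intro qring_aut_comp_quandle_aut o_bij[OF cs4_swap_comp_swap cs4_swap_comp_swap]
      cs4_swap_quandle_hom)

lemma qring_of_comp_cs4_swap: "qring_of p \<circ> cs4_swap = qring_of (cs4_swap p)"
  by (auto simp: fun_eq_iff qring_of_def)

lemma cs4_fun_eq_iff: "f = g \<longleftrightarrow> f X = g X \<and> f Y = g Y \<and> f Z = g Z"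
  unfolding fun_eq_iff by (metis cs4.exhaust)

lemma qring_mult_cs4_X: "qring_mult cs4_op a b X = a X * (b X + b Y) + a Y * b Z"
  by (simp add: qring_mult_def UNIV_cs4 distrib_left)

lemma qring_mult_cs4_Y: "qring_mult cs4_op a b Y = a Y * (b X + b Y) + a X * b Z"
  by (simp add: qring_mult_def UNIV_cs4 distrib_left)

lemma qring_mult_cs4_Z: "qring_mult cs4_op a b Z = a Z * (b X + b Y + b Z)"
  by (simp add: qring_mult_def UNIV_cs4 distrib_left)

lemmas qring_mult_cs4 = qring_mult_cs4_X qring_mult_cs4_Y qring_mult_cs4_Z

lemma qring_mult_cs4_qring_of_X: "qring_mult cs4_op a (qring_of X) = a"
  by (simp add: cs4_fun_eq_iff qring_mult_cs4 qring_of_def)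

lemma qring_mult_cs4_qring_of_Y: "qring_mult cs4_op a (qring_of Y) = a"
  by (simp add: cs4_fun_eq_iff qring_mult_cs4 qring_of_def)

lemma qring_mult_cs4_qring_of_Z: "qring_mult cs4_op a (qring_of Z) = a \<circ> cs4_swap"
  by (simp add: cs4_fun_eq_iff qring_mult_cs4 qring_of_def)

lemma cs4_right_identity_iff:
  "(\<forall>b. qring_mult cs4_op b u = b) \<longleftrightarrow> u X + u Y = 1 \<and> u Z = 0"
proof
  assume "\<forall>b. qring_mult cs4_op b u = b"
  then have "qring_mult cs4_op (qring_of X) u = qring_of X"
    by blast
  then show "u X + u Y = 1 \<and> u Z = 0"
    by (simp add: cs4_fun_eq_iff qring_mult_cs4 qring_of_def)
qed (simp add: cs4_fun_eq_iff qring_mult_cs4)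

lemma cs4_images_from_right_actions:
  assumes u: "\<forall>b. qring_mult cs4_op b u = b" and v: "\<forall>b. qring_mult cs4_op b v = b"
    and w: "\<forall>b. qring_mult cs4_op (qring_mult cs4_op b w) w = b"
    and uw: "qring_mult cs4_op u w = v" and ww: "qring_mult cs4_op w w = w" and "u \<noteq> v"
  shows "w = qring_of Z" and "v = u \<circ> cs4_swap"
proof -
  define t c where "t = w X + w Y" and "c = w Z"
  have u1: "u X + u Y = 1" "u Z = 0" and v1: "v X + v Y = 1" "v Z = 0"
    using u v cs4_right_identity_iff by blast+
  have "qring_mult cs4_op (qring_mult cs4_op (qring_of X) w) w = qring_of X"
    using w by blast
  then have tc: "t * t + c * c = 1" "t * c = 0"
    by (simp_all add: cs4_fun_eq_iff qring_mult_cs4 qring_of_def t_def c_def algebra_simps)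
  have v_uw: "v X = u X * t + u Y * c" "v Y = u Y * t + u X * c"
    unfolding uw[symmetric] by (simp_all add: qring_mult_cs4 t_def c_def)
  have t0: "t = 0"
  proof (rule ccontr)
    assume "t \<noteq> 0"
    then have "c = 0"
      using tc by simp
    then have "v X + v Y = t * (u X + u Y)"
      using v_uw by (simp add: algebra_simps)
    then have "t = 1"
      using u1 v1 by simp
    with \<open>c = 0\<close> have "u = v"
      using v_uw u1 v1 by (simp add: cs4_fun_eq_iff)
    with \<open>u \<noteq> v\<close> show False ..
  qed
  have "v X + v Y = c * (u X + u Y)"
    using v_uw t0 by (simp add: algebra_simps)
  then have c1: "c = 1"
    using u1 v1 by simp
  have "w Y = w X"
    using fun_cong[OF ww, of X] t0 c1 by (simp add: qring_mult_cs4 t_def c_def)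
  then have "w X = 0" "w Y = 0"
    using t0 by (simp_all add: t_def)
  with c1 show "w = qring_of Z"
    by (simp add: cs4_fun_eq_iff qring_of_def c_def)
  show "v = u \<circ> cs4_swap"
    using v_uw u1 v1 t0 c1 by (simp add: cs4_fun_eq_iff)
qed

lemma cs4_qring_aut_generator_images:
  assumes "qring_aut cs4_op f"
  shows "f (qring_of Z) = qring_of Z" and "f (qring_of Y) = f (qring_of X) \<circ> cs4_swap"
    and "f (qring_of X) X + f (qring_of X) Y = 1" and "f (qring_of X) Z = 0"
proof -
  have bij: "bij f"
    and mult: "\<And>a b. f (qring_mult cs4_op a b) = qring_mult cs4_op (f a) (f b)"
    using assms by (auto simp: qring_aut_def)
  have f_inv: "f (inv_into UNIV f b) = b" for b
    using bij by (simp add: bij_is_surj surj_f_inv_f)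
  have inv_f: "inv_into UNIV f (f a) = a" for a
    using bij by (simp add: bij_is_inj)
  note right = qring_aut_mult_image[OF assms]
  have u: "\<forall>b. qring_mult cs4_op b (f (qring_of X)) = b"
    by (simp add: right qring_mult_cs4_qring_of_X f_inv)
  have v: "\<forall>b. qring_mult cs4_op b (f (qring_of Y)) = b"
    by (simp add: right qring_mult_cs4_qring_of_Y f_inv)
  have w: "\<forall>b. qring_mult cs4_op (qring_mult cs4_op b (f (qring_of Z))) (f (qring_of Z)) = b"
    by (simp add: right inv_f f_inv qring_mult_cs4_qring_of_Z comp_assoc cs4_swap_comp_swap)
  have uw: "qring_mult cs4_op (f (qring_of X)) (f (qring_of Z)) = f (qring_of Y)"
    by (simp add: mult[symmetric] qring_mult_cs4_qring_of_Z qring_of_comp_cs4_swap)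
  have ww: "qring_mult cs4_op (f (qring_of Z)) (f (qring_of Z)) = f (qring_of Z)"
    by (simp add: mult[symmetric] qring_mult_cs4_qring_of_Z qring_of_comp_cs4_swap)
  have "qring_of X \<noteq> qring_of Y"
    by (simp add: cs4_fun_eq_iff qring_of_def)
  then have "f (qring_of X) \<noteq> f (qring_of Y)"
    using bij_is_inj[OF bij] by (auto dest: injD)
  from cs4_images_from_right_actions[OF u v w uw ww this]
  show "f (qring_of Z) = qring_of Z" and "f (qring_of Y) = f (qring_of X) \<circ> cs4_swap" .
  from u show "f (qring_of X) X + f (qring_of X) Y = 1" and "f (qring_of X) Z = 0"
    by (simp_all only: cs4_right_identity_iff)
qed

lemma cs4_qring_aut_cases:
  assumes f: "qring_aut cs4_op f"
  shows "f = id \<or> f = (\<lambda>a. a \<circ> cs4_swap)"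
proof -
  define u where "u = f (qring_of X)"
  note images = cs4_qring_aut_generator_images[OF f, folded u_def]
  have add: "additive f"
    using f by (rule qring_aut_additive)
  have expand: "f a r = a X * u r + a Y * u (cs4_swap r) + a Z * qring_of Z r" for a r
    using additive_qring_expansion[OF add, of a r] images by (simp add: UNIV_cs4 u_def)
  obtain a where "f a = qring_of X"
    using f by (metis qring_aut_def bij_pointE)
  then have "a X * u X + a Y * u Y = 1" and "a X * u Y + a Y * u X = 0"
    using expand[of a X] expand[of a Y] by (simp_all add: qring_of_def)
  moreover have "(a X - a Y) * (u X - u Y) = (a X * u X + a Y * u Y) - (a X * u Y + a Y * u X)"
    by (simp add: algebra_simps)
  ultimately have "u X - u Y = 1 \<or> u X - u Y = -1"
    using zmult_eq_1_iff by auto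
  with images(3,4) have "u = qring_of X \<or> u = qring_of Y"
    by (auto simp: cs4_fun_eq_iff qring_of_def)
  then show ?thesis
  proof
    assume "u = qring_of X"
    then have "f (qring_of q) = id (qring_of q)" for q
      using images by (cases q) (simp_all add: u_def qring_of_comp_cs4_swap)
    then have "f = id"
      by (intro additive_qring_eqI add qring_aut_additive[OF qring_aut_id])
    then show ?thesis ..
  next
    assume "u = qring_of Y"
    then have "f (qring_of q) = qring_of q \<circ> cs4_swap" for q
      using images by (cases q) (simp_all add: u_def qring_of_comp_cs4_swap)
    then have "f = (\<lambda>a. a \<circ> cs4_swap)"
      by (intro additive_qring_eqI add qring_aut_additive[OF qring_aut_cs4_swap])
    then show ?thesis ..
  qed
qed

lemma iso_integer_mod_group_2I:
  assumes "monoid G" and "carrier G = {\<one>\<^bsub>G\<^esub>, s}" and "s \<noteq> \<one>\<^bsub>G\<^esub>"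
    and "s \<otimes>\<^bsub>G\<^esub> s = \<one>\<^bsub>G\<^esub>"
  shows "G \<cong> integer_mod_group 2"
proof (rule is_isoI)
  define h where "h = (\<lambda>x. if x = \<one>\<^bsub>G\<^esub> then 0 else 1 :: int)"
  have "h \<in> hom G (integer_mod_group 2)"
  proof (rule homI)
    fix x y
    assume "x \<in> carrier G" and "y \<in> carrier G"
    then show "h (x \<otimes>\<^bsub>G\<^esub> y) = h x \<otimes>\<^bsub>integer_mod_group 2\<^esub> h y"
      using assms by (auto simp: h_def monoid.l_one monoid.r_one)
  qed (simp add: h_def carrier_integer_mod_group)
  moreover have "bij_betw h (carrier G) {0..<2}"
    using assms(2,3) by (auto simp: bij_betw_def inj_on_def h_def)
  ultimately show "h \<in> iso G (integer_mod_group 2)"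
    by (simp add: iso_def carrier_integer_mod_group)
qed

lemma carrier_qring_Aut_cs4: "carrier (qring_Aut cs4_op) = {id, \<lambda>a. a \<circ> cs4_swap}"
  using cs4_qring_aut_cases qring_aut_id qring_aut_cs4_swap by (auto simp: qring_Aut_def)

lemma cs4_swap_aut_neq_id: "(\<lambda>a :: cs4 \<Rightarrow> int. a \<circ> cs4_swap) \<noteq> id"
proof
  assume "(\<lambda>a :: cs4 \<Rightarrow> int. a \<circ> cs4_swap) = id"
  from fun_cong[OF this, of "qring_of X"] have "qring_of X \<circ> cs4_swap = qring_of X"
    by simp
  then show False
    by (simp add: qring_of_comp_cs4_swap cs4_fun_eq_iff qring_of_def)
qed

theorem theorem6p2:
  shows "qring_Aut cs4_op \<cong> integer_mod_group 2"
proof (rule iso_integer_mod_group_2I)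
  show "monoid (qring_Aut cs4_op)"
    by (rule monoid_qring_Aut)
  show "carrier (qring_Aut cs4_op) = {\<one>\<^bsub>qring_Aut cs4_op\<^esub>, \<lambda>a. a \<circ> cs4_swap}"
    by (simp add: carrier_qring_Aut_cs4 one_qring_Aut)
  show "(\<lambda>a. a \<circ> cs4_swap) \<noteq> \<one>\<^bsub>qring_Aut cs4_op\<^esub>"
    using cs4_swap_aut_neq_id by (simp add: one_qring_Aut)
  show "(\<lambda>a. a \<circ> cs4_swap) \<otimes>\<^bsub>qring_Aut cs4_op\<^esub> (\<lambda>a. a \<circ> cs4_swap) = \<one>\<^bsub>qring_Aut cs4_op\<^esub>"
    by (simp add: one_qring_Aut mult_qring_Aut fun_eq_iff)
qed

end
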